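(* Let $n\ge 1$ and $k\ge 2$ be integers and let $T=T^1\times\cdots\times T^n$ be a finite product space with $|T^j|=k$ for every $j$, so $|T|=k^n$. Let $D$ be the uniform distribution on $T$; in particular $D$ is a product distribution $D=D^1\times\cdots\times D^n$, each $D^j$ being uniform on $T^j$. Fix a constant $c$ with $0<c<0.017$. There is an absolute constant $C>0$ (independent of $n,k,m,\varepsilon$) such that for every $\varepsilon\in(0,1/2]$ and every positive integer $m< c\,k^n/\varepsilon^2$, if $S=\{s_1,\dots,s_m\}$ consists of $m$ i.i.d. samples from $D$, then \[\Pr_{S\sim D^m}\big[d_{\mathrm{TV}}(\mathrm{emp}(S),D)>\varepsilon\big]\ \ge\ 1-\frac{C}{k^n}.\]
   Context: For distributions $E,D$ on a finite set $T$, the total variation distance is $d_{\mathrm{TV}}(E,D)=\frac12\sum_{x\in T}|E(x)-D(x)|$, where $E(x)$ is the probability that $E$ assigns to $x$. For a sample multiset $S=\{s_1,\dots,s_m\}\subseteq T$, the empirical distribution is $\mathrm{emp}(S)=\frac1m\sum_{i=1}^m\delta_{s_i}$, where $\delta_s$ is the point mass at $s$; i.e. $\mathrm{emp}(S)(x)=\frac1m\#\{i: s_i=x\}$. *)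

theory Defs
  imports "HOL-Probability.Probability"
begin

definition emp :: "nat \<Rightarrow> (nat \<Rightarrow> 'b) \<Rightarrow> 'b \<Rightarrow> real" where
  "emp m s x = real (card {i \<in> {..<m}. s i = x}) / real m"

definition tv_dist :: "'b set \<Rightarrow> ('b \<Rightarrow> real) \<Rightarrow> ('b \<Rightarrow> real) \<Rightarrow> real" where
  "tv_dist T E D = (1/2) * (\<Sum>x\<in>T. \<bar>E x - D x\<bar>)"

end

theory Submission
  imports Defs
begin

text \<open>If 2m < |T|, the sample misses more than half of T, so the empirical distribution is at
  distance more than 1/2 from the uniform one, deterministically. Otherwise write the distance as
  (1/2m) \<Sigma>_x |Y_x| with Y_x = \<Sigma>_j (1[s_j = x] - 1/|T|), a sum of m i.i.d. centred variables.
  Its second and fourth moments, together with |y| \<ge> 3y^2/(2t) - y^4/(2t^3), give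
  E|Y_x| \<ge> 0.44 sqrt(m/|T|) approximately, so the expected distance is at least 0.21 sqrt(|T|/m),
  which exceeds \<epsilon> by a margin of the same order when m < c |T|/\<epsilon>^2. Replacing one sample moves
  the distance by at most 1/m, so its variance is at most 1/m (Efron--Stein), and Chebyshev's
  inequality bounds the failure probability by O(1/|T|).\<close>

section \<open>Products of finite PMFs\<close>

lemma finite_set_Pi_pmf:
  assumes "finite A" "\<And>i. i \<in> A \<Longrightarrow> finite (set_pmf (p i))"
  shows "finite (set_pmf (Pi_pmf A d p))"
  using assms by (simp add: set_Pi_pmf finite_PiE_dflt)

lemma integral_pair_pmf_finite:
  fixes h :: "'a \<times> 'b \<Rightarrow> real"
  assumes "finite (set_pmf A)" "finite (set_pmf B)"
  shows "(\<integral>x. h x \<partial>pair_pmf A B) = (\<integral>b. (\<integral>a. h (a, b) \<partial>A) \<partial>B)"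
proof -
  have "(\<integral>x. h x \<partial>pair_pmf A B) = (\<Sum>x\<in>set_pmf A \<times> set_pmf B. h x * pmf (pair_pmf A B) x)"
    using assms by (intro integral_measure_pmf_real) auto
  also have "\<dots> = (\<Sum>a\<in>set_pmf A. \<Sum>b\<in>set_pmf B. h (a, b) * (pmf A a * pmf B b))"
    by (simp add: sum.cartesian_product) (intro sum.cong refl, auto simp: pmf_pair)
  also have "\<dots> = (\<Sum>b\<in>set_pmf B. (\<Sum>a\<in>set_pmf A. h (a, b) * pmf A a) * pmf B b)"
    by (subst sum.swap) (simp add: sum_distrib_right sum_distrib_left mult_ac)
  also have "\<dots> = (\<integral>b. (\<integral>a. h (a, b) \<partial>A) \<partial>B)"
    using assms by (simp add: integral_measure_pmf_real[where A="set_pmf A"]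
                              integral_measure_pmf_real[where A="set_pmf B"])
  finally show ?thesis .
qed

lemma integral_Pi_pmf_lessThan_Suc:
  fixes h :: "(nat \<Rightarrow> 'a) \<Rightarrow> real"
  assumes "finite (set_pmf D)"
  shows "(\<integral>S. h S \<partial>Pi_pmf {..<Suc m} d (\<lambda>_. D))
       = (\<integral>S. (\<integral>y. h (S(m := y)) \<partial>D) \<partial>Pi_pmf {..<m} d (\<lambda>_. D))"
  using assms
  by (simp add: lessThan_Suc Pi_pmf_insert integral_pair_pmf_finite finite_set_Pi_pmf)

lemma abs_integral_measure_pmf_le:
  fixes u :: "'a \<Rightarrow> real"
  assumes "finite (set_pmf D)" "\<And>y. \<bar>u y\<bar> \<le> c"
  shows "\<bar>\<integral>y. u y \<partial>D\<bar> \<le> c"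
proof -
  have "\<bar>\<integral>y. u y \<partial>D\<bar> \<le> (\<integral>y. \<bar>u y\<bar> \<partial>D)"
    by (rule integral_abs_bound)
  also have "\<dots> \<le> (\<integral>y. c \<partial>D)"
    using assms by (intro integral_mono integrable_measure_pmf_finite) auto
  finally show ?thesis by simp
qed

lemma integral_power2_diff_measure_pmf:
  fixes h :: "'a \<Rightarrow> real"
  assumes "finite (set_pmf D)"
  shows "(\<integral>y. (h y - \<mu>)\<^sup>2 \<partial>D) = (\<integral>y. (h y - (\<integral>y. h y \<partial>D))\<^sup>2 \<partial>D) + ((\<integral>y. h y \<partial>D) - \<mu>)\<^sup>2"
  using assms
  by (simp add: power2_diff integrable_measure_pmf_finite integral_diff integral_add
                power2_eq_square algebra_simps)

text \<open>Efron--Stein: the inner integral g averages out the last coordinate, so the variance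
  splits into the variance of g (induction) plus the conditional variance in the last
  coordinate, which is at most c^2.\<close>
lemma variance_Pi_pmf_le_bounded_differences:
  fixes f :: "(nat \<Rightarrow> 'a) \<Rightarrow> real"
  assumes fin: "finite (set_pmf D)" and "c \<ge> 0"
    and "\<And>S i y. i < m \<Longrightarrow> \<bar>f (S(i := y)) - f S\<bar> \<le> c"
  shows "(\<integral>S. (f S - (\<integral>S. f S \<partial>Pi_pmf {..<m} d (\<lambda>_. D)))\<^sup>2 \<partial>Pi_pmf {..<m} d (\<lambda>_. D))
         \<le> real m * c\<^sup>2"
  using assms(3)
proof (induction m arbitrary: f)
  case 0
  then show ?case by simp
next
  case (Suc m)
  let ?P = "Pi_pmf {..<m} d (\<lambda>_. D)"
  have intP: "integrable ?P h" for h :: "(nat \<Rightarrow> 'a) \<Rightarrow> real"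
    using fin by (simp add: integrable_measure_pmf_finite finite_set_Pi_pmf)
  define g where "g S = (\<integral>y. f (S(m := y)) \<partial>D)" for S
  define \<mu> where "\<mu> = (\<integral>S. f S \<partial>Pi_pmf {..<Suc m} d (\<lambda>_. D))"
  have \<mu>_eq: "\<mu> = (\<integral>S. g S \<partial>?P)"
    unfolding \<mu>_def g_def by (rule integral_Pi_pmf_lessThan_Suc[OF fin])
  have g_diff: "g (S(i := y)) - g S = (\<integral>y'. f ((S(m := y'))(i := y)) - f (S(m := y')) \<partial>D)"
    if "i < m" for S i y
    using that fin unfolding g_def
    by (simp add: fun_upd_twist integral_diff integrable_measure_pmf_finite)
  have g_bounded: "\<bar>g (S(i := y)) - g S\<bar> \<le> c" if "i < m" for S i y
    unfolding g_diff[OF that] using Suc.prems that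
    by (intro abs_integral_measure_pmf_le fin) (meson less_SucI)
  have last_coordinate: "(f (S(m := y)) - g S)\<^sup>2 \<le> c\<^sup>2" for S y
  proof -
    have "g S - f (S(m := y)) = (\<integral>y'. f ((S(m := y))(m := y')) - f (S(m := y)) \<partial>D)"
      using fin unfolding g_def by (simp add: integral_diff integrable_measure_pmf_finite)
    also have "\<bar>\<dots>\<bar> \<le> c"
      using Suc.prems by (intro abs_integral_measure_pmf_le fin) (metis fun_upd_upd lessI)
    finally have "\<bar>f (S(m := y)) - g S\<bar> \<le> c"
      by (simp add: abs_minus_commute)
    then show ?thesis
      using power_mono[OF _ abs_ge_zero, of _ c 2] by simp
  qed
  have inner: "(\<integral>y. (f (S(m := y)) - \<mu>)\<^sup>2 \<partial>D) \<le> c\<^sup>2 + (g S - \<mu>)\<^sup>2" for S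
  proof -
    have "(\<integral>y. (f (S(m := y)) - \<mu>)\<^sup>2 \<partial>D) = (\<integral>y. (f (S(m := y)) - g S)\<^sup>2 \<partial>D) + (g S - \<mu>)\<^sup>2"
      unfolding g_def by (rule integral_power2_diff_measure_pmf[OF fin])
    also have "(\<integral>y. (f (S(m := y)) - g S)\<^sup>2 \<partial>D) \<le> (\<integral>y. c\<^sup>2 \<partial>D)"
      using last_coordinate fin by (intro integral_mono integrable_measure_pmf_finite) auto
    finally show ?thesis by simp
  qed
  have "(\<integral>S. (f S - \<mu>)\<^sup>2 \<partial>Pi_pmf {..<Suc m} d (\<lambda>_. D))
      = (\<integral>S. (\<integral>y. (f (S(m := y)) - \<mu>)\<^sup>2 \<partial>D) \<partial>?P)"
    by (rule integral_Pi_pmf_lessThan_Suc[OF fin])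
  also have "\<dots> \<le> (\<integral>S. c\<^sup>2 + (g S - \<mu>)\<^sup>2 \<partial>?P)"
    using inner by (intro integral_mono intP)
  also have "\<dots> = c\<^sup>2 + (\<integral>S. (g S - \<mu>)\<^sup>2 \<partial>?P)"
    by (simp add: integral_add intP)
  also have "(\<integral>S. (g S - \<mu>)\<^sup>2 \<partial>?P) \<le> real m * c\<^sup>2"
    unfolding \<mu>_eq using Suc.IH g_bounded by blast
  finally show ?case unfolding \<mu>_def by (simp add: algebra_simps)
qed

lemma sum_lessThan_Suc_fun_upd:
  "(\<Sum>i<Suc m. z ((S(m := y)) i)) = (\<Sum>i<m. z (S i)) + z y"
  by simp

lemma integral_sum_Pi_pmf_eq_0:
  fixes z :: "'a \<Rightarrow> real" and m :: nat
  assumes fin: "finite (set_pmf D)" and mean: "(\<integral>y. z y \<partial>D) = 0"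
  shows "(\<integral>S. (\<Sum>i<m. z (S i)) \<partial>Pi_pmf {..<m} d (\<lambda>_. D)) = 0"
proof (induction m)
  case (Suc m)
  have "(\<integral>y. a + z y \<partial>D) = a" for a
    using fin mean by (simp add: integral_add integrable_measure_pmf_finite)
  with Suc show ?case
    by (simp only: integral_Pi_pmf_lessThan_Suc[OF fin] sum_lessThan_Suc_fun_upd)
qed simp

lemma integral_sum_Pi_pmf_power2:
  fixes z :: "'a \<Rightarrow> real"
  assumes fin: "finite (set_pmf D)" and mean: "(\<integral>y. z y \<partial>D) = 0"
    and var: "(\<integral>y. (z y)\<^sup>2 \<partial>D) = v"
  shows "(\<integral>S. (\<Sum>i<m. z (S i))\<^sup>2 \<partial>Pi_pmf {..<m} d (\<lambda>_. D)) = real m * v"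
proof (induction m)
  case (Suc m)
  let ?P = "Pi_pmf {..<m} d (\<lambda>_. D)"
  have "(\<integral>y. (a + z y)\<^sup>2 \<partial>D) = a\<^sup>2 + v" for a
    using fin mean var by (simp add: power2_sum integral_add integrable_measure_pmf_finite)
  then have "(\<integral>S. (\<Sum>i<Suc m. z (S i))\<^sup>2 \<partial>Pi_pmf {..<Suc m} d (\<lambda>_. D))
      = (\<integral>S. (\<Sum>i<m. z (S i))\<^sup>2 + v \<partial>?P)"
    by (simp only: integral_Pi_pmf_lessThan_Suc[OF fin] sum_lessThan_Suc_fun_upd)
  also have "\<dots> = real (Suc m) * v"
    using Suc fin by (simp add: integral_add integrable_measure_pmf_finite finite_set_Pi_pmf algebra_simps)
  finally show ?case .
qed simp

lemma integral_sum_Pi_pmf_power4_le: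
  fixes z :: "'a \<Rightarrow> real"
  assumes fin: "finite (set_pmf D)" and mean: "(\<integral>y. z y \<partial>D) = 0"
    and var: "(\<integral>y. (z y)\<^sup>2 \<partial>D) = v" and fourth: "(\<integral>y. (z y)^4 \<partial>D) \<le> q"
  shows "(\<integral>S. (\<Sum>i<m. z (S i))^4 \<partial>Pi_pmf {..<m} d (\<lambda>_. D)) \<le> real m * q + 3 * (real m)\<^sup>2 * v\<^sup>2"
proof (induction m)
  case (Suc m)
  let ?P = "Pi_pmf {..<m} d (\<lambda>_. D)"
  let ?Y = "\<lambda>S. \<Sum>i<m. z (S i)"
  define z3 where "z3 = (\<integral>y. (z y)^3 \<partial>D)"
  define z4 where "z4 = (\<integral>y. (z y)^4 \<partial>D)"
  have intD: "integrable D h" and intP: "integrable ?P h'"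
    for h :: "'a \<Rightarrow> real" and h' :: "(nat \<Rightarrow> 'a) \<Rightarrow> real"
    using fin by (simp_all add: integrable_measure_pmf_finite finite_set_Pi_pmf)
  have "(a + z y)^4 = a^4 + 4 * a^3 * z y + 6 * a\<^sup>2 * (z y)\<^sup>2 + 4 * a * (z y)^3 + (z y)^4" for a y
    by (simp add: eval_nat_numeral algebra_simps)
  then have "(\<integral>y. (a + z y)^4 \<partial>D) = a^4 + 6 * v * a\<^sup>2 + 4 * z3 * a + z4" for a
    using mean var unfolding z3_def z4_def by (simp add: integral_add intD mult_ac)
  then have "(\<integral>S. (\<Sum>i<Suc m. z (S i))^4 \<partial>Pi_pmf {..<Suc m} d (\<lambda>_. D))
      = (\<integral>S. (?Y S)^4 + 6 * v * (?Y S)\<^sup>2 + 4 * z3 * ?Y S + z4 \<partial>?P)"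
    by (simp only: integral_Pi_pmf_lessThan_Suc[OF fin] sum_lessThan_Suc_fun_upd)
  also have "\<dots> = (\<integral>S. (?Y S)^4 \<partial>?P) + 6 * v * (real m * v) + z4"
    using integral_sum_Pi_pmf_eq_0[OF fin mean] integral_sum_Pi_pmf_power2[OF fin mean var]
    by (simp add: integral_add intP)
  also have "\<dots> \<le> real (Suc m) * q + 3 * (real (Suc m))\<^sup>2 * v\<^sup>2"
  proof -
    have "3 * (real (Suc m))\<^sup>2 * v\<^sup>2 = 3 * (real m)\<^sup>2 * v\<^sup>2 + 6 * v * (real m * v) + 3 * v\<^sup>2"
      by (simp add: power2_eq_square algebra_simps)
    moreover have "v\<^sup>2 \<ge> 0" by simp
    ultimately show ?thesis
      using Suc fourth unfolding z4_def of_nat_Suc by (simp only: distrib_right mult_1)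
  qed
  finally show ?case .
qed simp

section \<open>A lower bound for the first absolute moment\<close>

lemma abs_ge_moment_combination:
  fixes y t :: real
  assumes "t > 0"
  shows "3 / (2 * t) * y\<^sup>2 - 1 / (2 * t^3) * y^4 \<le> \<bar>y\<bar>"
proof -
  define a where "a = \<bar>y\<bar>"
  have "a \<ge> 0" unfolding a_def by simp
  then have "0 \<le> a * (a - t)\<^sup>2 * (a + 2 * t)"
    using assms by simp
  then have "3 * t\<^sup>2 * a\<^sup>2 - a^4 \<le> 2 * t^3 * a"
    by (simp add: algebra_simps power2_eq_square power3_eq_cube eval_nat_numeral)
  then have "(3 * t\<^sup>2 * a\<^sup>2 - a^4) / (2 * t^3) \<le> a"
    using assms by (simp add: divide_le_eq mult.commute)
  moreover have "(3 * t\<^sup>2 * a\<^sup>2 - a^4) / (2 * t^3) = 3 / (2 * t) * y\<^sup>2 - 1 / (2 * t^3) * y^4"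
    using assms unfolding a_def
    by (simp add: power_even_abs field_simps power2_eq_square power3_eq_cube eval_nat_numeral)
  ultimately show ?thesis unfolding a_def by simp
qed

lemma integral_abs_ge_moment_combination:
  fixes Y :: "'a \<Rightarrow> real"
  assumes "finite (set_pmf P)" "t > 0"
  shows "3 / (2 * t) * (\<integral>x. (Y x)\<^sup>2 \<partial>P) - 1 / (2 * t^3) * (\<integral>x. (Y x)^4 \<partial>P) \<le> (\<integral>x. \<bar>Y x\<bar> \<partial>P)"
proof -
  have "(\<integral>x. 3 / (2 * t) * (Y x)\<^sup>2 - 1 / (2 * t^3) * (Y x)^4 \<partial>P) \<le> (\<integral>x. \<bar>Y x\<bar> \<partial>P)"
    using assms abs_ge_moment_combination by (intro integral_mono integrable_measure_pmf_finite) auto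
  then show ?thesis
    using assms(1) by (simp add: integral_diff integrable_measure_pmf_finite)
qed

lemma integral_abs_ge_sqrt_second_moment:
  fixes Y :: "'a \<Rightarrow> real"
  assumes fin: "finite (set_pmf P)" and second: "(\<integral>x. (Y x)\<^sup>2 \<partial>P) = s"
    and fourth: "(\<integral>x. (Y x)^4 \<partial>P) \<le> s + 3 * s\<^sup>2" and s: "497/1000 \<le> s"
  shows "44/100 * sqrt s \<le> (\<integral>x. \<bar>Y x\<bar> \<partial>P)"
proof -
  define \<sigma> where "\<sigma> = sqrt s"
  define t where "t = 9/4 * \<sigma>"
  have \<sigma>: "\<sigma> > 0" "\<sigma>\<^sup>2 = s" unfolding \<sigma>_def using s by simp_all
  have t: "t > 0" unfolding t_def using \<sigma> by simp
  have "44/100 * \<sigma> \<le> 2/3 * \<sigma> - 32 * (1 + 3 * \<sigma>\<^sup>2) / (729 * \<sigma>)"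
    using \<sigma> s by (simp add: field_simps power2_eq_square)
  also have "\<dots> = 3 / (2 * t) * s - 1 / (2 * t^3) * (s + 3 * s\<^sup>2)"
    unfolding t_def \<sigma>(2)[symmetric] using \<sigma>(1)
    by (simp add: field_simps power2_eq_square eval_nat_numeral)
  also have "\<dots> \<le> 3 / (2 * t) * s - 1 / (2 * t^3) * (\<integral>x. (Y x)^4 \<partial>P)"
    using fourth t by (simp add: divide_right_mono)
  also have "\<dots> \<le> (\<integral>x. \<bar>Y x\<bar> \<partial>P)"
    using integral_abs_ge_moment_combination[OF fin t, of Y] second by simp
  finally show ?thesis unfolding \<sigma>_def .
qed

lemma abs_indicator_minus_pmf_le_1: "\<bar>indicator {x} y - pmf D x\<bar> \<le> (1::real)"
  by (simp add: indicator_def pmf_le_1)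

lemma integrable_indicator_minus_pmf_power:
  fixes D :: "'a pmf"
  shows "integrable D (\<lambda>y. (indicator {x} y - pmf D x) ^ k)"
proof (rule measure_pmf.integrable_const_bound[where B=1])
  show "AE y in D. norm ((indicator {x} y - pmf D x) ^ k) \<le> (1::real)"
    by (intro AE_I2) (metis abs_ge_zero power_abs power_le_one abs_indicator_minus_pmf_le_1 real_norm_def)
qed simp

lemma integrable_measure_pmf_indicator: "integrable (measure_pmf D) (indicator A :: _ \<Rightarrow> real)"
  by (rule integrable_real_indicator) (simp_all add: less_top[symmetric] measure_pmf.emeasure_finite)

lemma integral_indicator_minus_pmf:
  fixes D :: "'a pmf"
  shows "(\<integral>y. indicator {x} y - pmf D x \<partial>D) = 0"
  by (simp add: integral_diff integrable_measure_pmf_indicator measure_pmf_single)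

lemma integral_indicator_minus_pmf_power2:
  fixes D :: "'a pmf"
  shows "(\<integral>y. (indicator {x} y - pmf D x)\<^sup>2 \<partial>D) = pmf D x * (1 - pmf D x)"
proof -
  have "(indicator {x} y - pmf D x)\<^sup>2 = (1 - 2 * pmf D x) * indicator {x} y + (pmf D x)\<^sup>2" for y
    by (simp add: indicator_def power2_eq_square algebra_simps)
  then have "(\<integral>y. (indicator {x} y - pmf D x)\<^sup>2 \<partial>D) = (1 - 2 * pmf D x) * pmf D x + (pmf D x)\<^sup>2"
    by (simp add: integral_add integrable_measure_pmf_indicator measure_pmf_single)
  then show ?thesis
    by (simp add: power2_eq_square algebra_simps)
qed

lemma integral_indicator_minus_pmf_power4_le:
  fixes D :: "'a pmf"
  shows "(\<integral>y. (indicator {x} y - pmf D x)^4 \<partial>D) \<le> (\<integral>y. (indicator {x} y - pmf D x)\<^sup>2 \<partial>D)"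
proof (rule integral_mono[OF integrable_indicator_minus_pmf_power integrable_indicator_minus_pmf_power])
  fix y
  have "(indicator {x} y - pmf D x)\<^sup>2 \<le> (1::real)"
    using abs_indicator_minus_pmf_le_1 by (simp add: abs_square_le_1)
  then show "(indicator {x} y - pmf D x)^4 \<le> (indicator {x} y - pmf D x)\<^sup>2"
    using mult_right_mono[of "(indicator {x} y - pmf D x)\<^sup>2" 1 "(indicator {x} y - pmf D x)\<^sup>2"]
    by (simp add: power2_eq_square eval_nat_numeral mult.assoc)
qed

section \<open>Empirical distributions\<close>

lemma emp_eq_sum_indicator: "emp m S x = (\<Sum>j<m. indicator {x} (S j)) / real m"
  unfolding emp_def by (simp add: indicator_def sum.If_cases Int_def)

lemma emp_minus_eq_sum:
  assumes "m > 0"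
  shows "emp m S x - p = (\<Sum>j<m. indicator {x} (S j) - p) / real m"
  using assms by (simp add: emp_eq_sum_indicator sum_subtractf field_simps)

lemma emp_fun_upd_minus_emp:
  assumes "i < m"
  shows "emp m (S(i := y)) x - emp m S x = (indicator {x} y - indicator {x} (S i)) / real m"
proof -
  have "(\<Sum>j<m. indicator {x} ((S(i := y)) j)) = (indicator {x} y :: real) + (\<Sum>j\<in>{..<m} - {i}. indicator {x} (S j))"
    using assms by (subst sum.remove[of _ i]) (auto intro!: sum.cong)
  moreover have "(\<Sum>j<m. indicator {x} (S j)) = (indicator {x} (S i) :: real) + (\<Sum>j\<in>{..<m} - {i}. indicator {x} (S j))"
    using assms by (subst sum.remove[of _ i]) auto
  ultimately show ?thesis
    unfolding emp_eq_sum_indicator by (simp add: diff_divide_distrib[symmetric])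
qed

lemma sum_emp:
  assumes "finite T" "\<forall>i<m. S i \<in> T" "m > 0"
  shows "(\<Sum>x\<in>T. emp m S x) = 1"
proof -
  have "(\<Sum>x\<in>T. \<Sum>j<m. indicator {x} (S j)) = (\<Sum>j<m. (1::real))"
    using assms by (subst sum.swap) (intro sum.cong refl, simp add: indicator_def sum.delta)
  then show ?thesis
    using assms by (simp add: emp_eq_sum_indicator sum_divide_distrib[symmetric])
qed

lemma abs_tv_dist_diff_le: "\<bar>tv_dist T E D - tv_dist T E' D\<bar> \<le> tv_dist T E E'"
proof -
  have "\<bar>(\<Sum>x\<in>T. \<bar>E x - D x\<bar>) - (\<Sum>x\<in>T. \<bar>E' x - D x\<bar>)\<bar> = \<bar>\<Sum>x\<in>T. \<bar>E x - D x\<bar> - \<bar>E' x - D x\<bar>\<bar>"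
    by (simp only: sum_subtractf)
  also have "\<dots> \<le> (\<Sum>x\<in>T. \<bar>\<bar>E x - D x\<bar> - \<bar>E' x - D x\<bar>\<bar>)"
    by (rule sum_abs)
  also have "\<dots> \<le> (\<Sum>x\<in>T. \<bar>E x - E' x\<bar>)"
    by (intro sum_mono) linarith
  finally show ?thesis
    unfolding tv_dist_def right_diff_distrib[symmetric] abs_mult by simp
qed

lemma sum_indicator_singleton:
  "finite T \<Longrightarrow> (\<Sum>x\<in>T. indicator {x} z) = (indicator T z :: real)"
  unfolding indicator_def by (simp add: sum.delta')

lemma tv_dist_emp_fun_upd_le:
  assumes "finite T" "i < m"
  shows "tv_dist T (emp m (S(i := y))) (emp m S) \<le> 1 / real m"
proof -
  have "(\<Sum>x\<in>T. \<bar>emp m (S(i := y)) x - emp m S x\<bar>)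
      \<le> (\<Sum>x\<in>T. (indicator {x} y + indicator {x} (S i)) / real m)"
    using assms(2) by (intro sum_mono) (auto simp: emp_fun_upd_minus_emp abs_divide indicator_def divide_right_mono)
  also have "\<dots> = (indicator T y + indicator T (S i)) / real m"
    by (simp only: sum_divide_distrib[symmetric] sum.distrib sum_indicator_singleton[OF assms(1)])
  also have "\<dots> \<le> 2 / real m"
    by (intro divide_right_mono) (auto simp: indicator_def)
  finally show ?thesis
    unfolding tv_dist_def by simp
qed

lemma tv_dist_ge_sum_outside:
  fixes E D :: "'a \<Rightarrow> real"
  assumes "finite T" "R \<subseteq> T" "\<forall>x\<in>T - R. E x = 0" "sum E T = 1" "sum D T = 1"
  shows "sum D (T - R) \<le> tv_dist T E D"
proof -
  have "sum E (T - R) = 0"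
    using assms(3) by (intro sum.neutral) blast
  then have "sum E R = 1" and "sum D R = 1 - sum D (T - R)"
    using assms(4,5) sum.subset_diff[OF assms(2,1), of E] sum.subset_diff[OF assms(2,1), of D]
    by simp_all
  moreover have "(\<Sum>x\<in>T. \<bar>E x - D x\<bar>) = (\<Sum>x\<in>R. \<bar>E x - D x\<bar>) + (\<Sum>x\<in>T - R. \<bar>D x\<bar>)"
    using assms by (simp add: sum.subset_diff[of R T])
  moreover have "(\<Sum>x\<in>R. E x - D x) \<le> (\<Sum>x\<in>R. \<bar>E x - D x\<bar>)" and "sum D (T - R) \<le> (\<Sum>x\<in>T - R. \<bar>D x\<bar>)"
    by (intro sum_mono, simp)+
  ultimately show ?thesis
    unfolding tv_dist_def by (simp add: sum_subtractf)
qed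

lemma tv_dist_emp_eq_sum_abs:
  assumes "m > 0" "\<forall>x\<in>T. pmf D x = p"
  shows "tv_dist T (emp m S) (pmf D) = 1 / (2 * real m) * (\<Sum>x\<in>T. \<bar>\<Sum>j<m. indicator {x} (S j) - p\<bar>)"
  using assms
  by (simp add: tv_dist_def emp_minus_eq_sum abs_divide sum_divide_distrib[symmetric])

lemma tv_dist_emp_pmf_of_set_ge:
  assumes "finite T" "\<forall>i<m. S i \<in> T" "m > 0"
  shows "1 - real m / real (card T) \<le> tv_dist T (emp m S) (pmf (pmf_of_set T))"
proof -
  let ?R = "S ` {..<m}"
  have R: "?R \<subseteq> T" and ne: "T \<noteq> {}" and N: "card T > 0"
    using assms by (auto simp: card_gt_0_iff)
  have "real (card T) - real m \<le> real (card (T - ?R))"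
    using card_image_le[of "{..<m}" S] card_mono[OF assms(1) R]
    by (simp add: card_Diff_subset[OF finite_subset[OF R assms(1)] R] of_nat_diff)
  then have "(real (card T) - real m) / real (card T) \<le> real (card (T - ?R)) / real (card T)"
    by (intro divide_right_mono) auto
  then have "1 - real m / real (card T) \<le> real (card (T - ?R)) / real (card T)"
    using N by (simp add: diff_divide_distrib)
  also have "\<dots> = (\<Sum>x\<in>T - ?R. pmf (pmf_of_set T) x)"
    using ne assms(1) by (simp add: sum_divide_distrib[symmetric])
  also have "\<dots> \<le> tv_dist T (emp m S) (pmf (pmf_of_set T))"
  proof (rule tv_dist_ge_sum_outside[OF assms(1) R])
    show "\<forall>x\<in>T - ?R. emp m S x = 0"
      by (auto simp: emp_def)
    show "sum (emp m S) T = 1"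
      using sum_emp[OF assms] .
    show "sum (pmf (pmf_of_set T)) T = 1"
      using ne assms(1) by simp
  qed
  finally show ?thesis .
qed

lemma prob_tv_dist_emp_gt_small_sample:
  assumes "finite T" "0 < m" "2 * m < card T" "\<epsilon> \<le> 1/2"
  shows "measure_pmf.prob (Pi_pmf {..<m} d (\<lambda>_. pmf_of_set T))
           {S. \<epsilon> < tv_dist T (emp m S) (pmf (pmf_of_set T))} = 1"
proof -
  have ne: "T \<noteq> {}" using assms(3) by auto
  have "\<epsilon> < tv_dist T (emp m S) (pmf (pmf_of_set T))"
    if "S \<in> set_pmf (Pi_pmf {..<m} d (\<lambda>_. pmf_of_set T))" for S
  proof -
    have "\<forall>i<m. S i \<in> T"
      using that assms(1) ne by (auto simp: set_Pi_pmf PiE_dflt_def)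
    then have "1 - real m / real (card T) \<le> tv_dist T (emp m S) (pmf (pmf_of_set T))"
      using tv_dist_emp_pmf_of_set_ge assms(1,2) by blast
    moreover have "real m / real (card T) < 1/2"
      using assms(3) by (simp add: divide_less_eq)
    ultimately show ?thesis using assms(4) by linarith
  qed
  then show ?thesis
    by (subst measure_pmf.prob_eq_1) (auto simp: AE_measure_pmf_iff)
qed

section \<open>Large samples\<close>

lemma sqrt_ratio_le_deviation_scale:
  fixes r M :: real
  assumes r: "r > 0" and M: "M \<ge> 201"
  shows "21/100 * sqrt (M / r) \<le> 1 / (2 * r) * (M * (44/100 * sqrt (r * (1 / M * (1 - 1 / M)))))"
proof (rule power2_le_imp_le)
  have "(21/100 * sqrt (M / r))\<^sup>2 = 441/10000 * M / r"
    unfolding power_mult_distrib using M r by (simp add: power2_eq_square)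
  also have "\<dots> \<le> 484/10000 * (M - 1) / r"
    using M r by (intro divide_right_mono) auto
  also have "\<dots> = (1 / (2 * r) * (M * (44/100 * sqrt (r * (1 / M * (1 - 1 / M))))))\<^sup>2"
    using M r unfolding power_mult_distrib by (simp add: power2_eq_square field_simps)
  finally show "(21/100 * sqrt (M / r))\<^sup>2 \<le> \<dots>" .
qed (use assms in simp)

lemma integral_tv_dist_emp_pmf_of_set_ge:
  assumes fin: "finite T" and N: "201 \<le> card T" and m: "card T \<le> 2 * m"
  shows "21/100 * sqrt (real (card T) / real m)
         \<le> (\<integral>S. tv_dist T (emp m S) (pmf (pmf_of_set T)) \<partial>Pi_pmf {..<m} d (\<lambda>_. pmf_of_set T))"
proof -
  let ?D = "pmf_of_set T"
  let ?P = "Pi_pmf {..<m} d (\<lambda>_. ?D)"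
  let ?N = "real (card T)"
  let ?Y = "\<lambda>x S. \<Sum>j<m. indicator {x} (S j) - 1 / ?N"
  have ne: "T \<noteq> {}" and m0: "m > 0" using N m by auto
  have finD: "finite (set_pmf ?D)" using fin ne by simp
  have pmfD: "\<forall>x\<in>T. pmf ?D x = 1 / ?N" using fin ne by simp
  define s where "s = real m * (1 / ?N * (1 - 1 / ?N))"
  have s: "497/1000 \<le> s"
  proof -
    have "497/1000 \<le> (?N / 2) * (1 / ?N * (1 - 1 / ?N))"
      using N by (simp add: field_simps)
    also have "\<dots> \<le> s"
      unfolding s_def using m N by (intro mult_right_mono) (auto simp: field_simps)
    finally show ?thesis .
  qed
  have abs_Y: "44/100 * sqrt s \<le> (\<integral>S. \<bar>?Y x S\<bar> \<partial>?P)" if "x \<in> T" for x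
  proof (rule integral_abs_ge_sqrt_second_moment[OF finite_set_Pi_pmf _ _ s])
    note mean = integral_indicator_minus_pmf[of ?D x]
    note var = integral_indicator_minus_pmf_power2[of ?D x]
    note fourth = integral_indicator_minus_pmf_power4_le[of ?D x, unfolded var]
    show "(\<integral>S. (?Y x S)\<^sup>2 \<partial>?P) = s"
      using integral_sum_Pi_pmf_power2[OF finD mean var] pmfD that unfolding s_def by simp
    show "(\<integral>S. (?Y x S)^4 \<partial>?P) \<le> s + 3 * s\<^sup>2"
      using integral_sum_Pi_pmf_power4_le[OF finD mean var fourth] pmfD that
      unfolding s_def power_mult_distrib by (simp add: mult.assoc)
  qed (use finD in auto)
  have "(\<integral>S. tv_dist T (emp m S) (pmf ?D) \<partial>?P) = 1 / (2 * real m) * (\<Sum>x\<in>T. \<integral>S. \<bar>?Y x S\<bar> \<partial>?P)"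
    unfolding tv_dist_emp_eq_sum_abs[OF m0 pmfD] using finD
    by (simp add: integral_sum integrable_measure_pmf_finite finite_set_Pi_pmf)
  also have "\<dots> \<ge> 1 / (2 * real m) * (?N * (44/100 * sqrt s))"
  proof (intro mult_left_mono)
    show "?N * (44/100 * sqrt s) \<le> (\<Sum>x\<in>T. \<integral>S. \<bar>?Y x S\<bar> \<partial>?P)"
      using sum_mono[of T "\<lambda>_. 44/100 * sqrt s", OF abs_Y] by simp
  qed simp
  finally have "1 / (2 * real m) * (?N * (44/100 * sqrt s)) \<le> (\<integral>S. tv_dist T (emp m S) (pmf ?D) \<partial>?P)" .
  moreover have "21/100 * sqrt (?N / real m) \<le> 1 / (2 * real m) * (?N * (44/100 * sqrt s))"
    using sqrt_ratio_le_deviation_scale[of "real m" ?N] m0 N unfolding s_def by simp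
  ultimately show ?thesis by linarith
qed

lemma variance_tv_dist_emp_le:
  assumes "finite T" "finite (set_pmf D)"
  shows "(\<integral>S. (tv_dist T (emp m S) (pmf D)
            - (\<integral>S. tv_dist T (emp m S) (pmf D) \<partial>Pi_pmf {..<m} d (\<lambda>_. D)))\<^sup>2
          \<partial>Pi_pmf {..<m} d (\<lambda>_. D)) \<le> 1 / real m"
proof -
  have "\<bar>tv_dist T (emp m (S(i := y))) (pmf D) - tv_dist T (emp m S) (pmf D)\<bar> \<le> 1 / real m"
    if "i < m" for S i y
    using abs_tv_dist_diff_le tv_dist_emp_fun_upd_le[OF assms(1) that] by (rule order_trans)
  then have "(\<integral>S. (tv_dist T (emp m S) (pmf D)
            - (\<integral>S. tv_dist T (emp m S) (pmf D) \<partial>Pi_pmf {..<m} d (\<lambda>_. D)))\<^sup>2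
          \<partial>Pi_pmf {..<m} d (\<lambda>_. D)) \<le> real m * (1 / real m)\<^sup>2"
    by (intro variance_Pi_pmf_le_bounded_differences assms(2)) auto
  then show ?thesis
    by (cases "m = 0") (simp_all add: power2_eq_square)
qed

lemma prob_gt_ge_of_variance_le:
  fixes F :: "'a \<Rightarrow> real"
  assumes fin: "finite (set_pmf P)" and "0 < a" and mean: "\<epsilon> + a \<le> (\<integral>x. F x \<partial>P)"
    and var: "(\<integral>x. (F x - (\<integral>x. F x \<partial>P))\<^sup>2 \<partial>P) \<le> V"
  shows "1 - V / a\<^sup>2 \<le> measure_pmf.prob P {x. \<epsilon> < F x}"
proof -
  let ?B = "{x \<in> space (measure_pmf P). a \<le> \<bar>F x - (\<integral>x. F x \<partial>P)\<bar>}"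
  have "measure_pmf.prob P ?B \<le> V / a\<^sup>2"
    using measure_pmf.Chebyshev_inequality[where M=P and f=F and a=a] fin \<open>0 < a\<close> var
    by (force simp: integrable_measure_pmf_finite intro: order_trans divide_right_mono)
  moreover have "space (measure_pmf P) - ?B \<subseteq> {x. \<epsilon> < F x}"
    using mean by auto
  then have "1 - measure_pmf.prob P ?B \<le> measure_pmf.prob P {x. \<epsilon> < F x}"
    by (subst measure_pmf.prob_compl[symmetric]) (auto intro: measure_pmf.finite_measure_mono)
  ultimately show ?thesis by linarith
qed

text \<open>With w = sqrt(|T|/m): \<epsilon> < 0.131 w and the mean distance is at least 0.21 w, which leaves
  the margin 0.079 w for Chebyshev's inequality, and 1/0.079^2 < 200.\<close>
lemma prob_tv_dist_emp_gt_large_sample: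
  assumes fin: "finite T" and N: "201 \<le> card T" and m: "card T \<le> 2 * m"
    and c: "c < 0.017" and \<epsilon>: "0 < \<epsilon>" and mc: "real m < c * real (card T) / \<epsilon>\<^sup>2"
  shows "1 - 200 / real (card T) \<le> measure_pmf.prob (Pi_pmf {..<m} d (\<lambda>_. pmf_of_set T))
           {S. \<epsilon> < tv_dist T (emp m S) (pmf (pmf_of_set T))}"
proof -
  let ?N = "real (card T)"
  define w where "w = sqrt (?N / real m)"
  have m0: "real m > 0" and N0: "?N > 0" and ne: "T \<noteq> {}" using N m by auto
  have w: "w > 0" "w\<^sup>2 = ?N / real m" unfolding w_def using m0 N0 by simp_all
  have "\<epsilon> < 131/1000 * w"
  proof (rule power_less_imp_less_base)
    have "\<epsilon>\<^sup>2 < c * ?N / real m"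
      using mc \<epsilon> m0 by (simp add: field_simps)
    also have "\<dots> \<le> 17161/1000000 * ?N / real m"
      using c by (intro divide_right_mono mult_right_mono) auto
    also have "\<dots> = (131/1000 * w)\<^sup>2"
      unfolding power_mult_distrib w(2) by (simp add: power2_eq_square)
    finally show "\<epsilon>^2 < (131/1000 * w)^2" .
  qed (use w in simp)
  then have mean: "\<epsilon> + 79/1000 * w \<le> (\<integral>S. tv_dist T (emp m S) (pmf (pmf_of_set T)) \<partial>Pi_pmf {..<m} d (\<lambda>_. pmf_of_set T))"
    using integral_tv_dist_emp_pmf_of_set_ge[OF fin N m, of d] unfolding w_def by linarith
  have "1 - (1 / real m) / (79/1000 * w)\<^sup>2 \<le> measure_pmf.prob (Pi_pmf {..<m} d (\<lambda>_. pmf_of_set T))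
           {S. \<epsilon> < tv_dist T (emp m S) (pmf (pmf_of_set T))}"
    using fin ne w
    by (intro prob_gt_ge_of_variance_le[OF _ _ mean] variance_tv_dist_emp_le finite_set_Pi_pmf) auto
  moreover have "(1 / real m) / (79/1000 * w)\<^sup>2 \<le> 200 / ?N"
    using m0 N0 unfolding power_mult_distrib w(2) by (simp add: field_simps)
  ultimately show ?thesis by linarith
qed

lemma prob_tv_dist_emp_pmf_of_set_gt:
  assumes fin: "finite T" and c: "c < 0.017" and \<epsilon>: "0 < \<epsilon>" "\<epsilon> \<le> 1/2" and m: "0 < m"
    and mc: "real m < c * real (card T) / \<epsilon>\<^sup>2"
  shows "1 - 200 / real (card T) \<le> measure_pmf.prob (Pi_pmf {..<m} d (\<lambda>_. pmf_of_set T))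
           {S. \<epsilon> < tv_dist T (emp m S) (pmf (pmf_of_set T))}"
proof -
  consider "card T \<le> 200" | "2 * m < card T" | "201 \<le> card T" "card T \<le> 2 * m"
    by linarith
  then show ?thesis
  proof cases
    case 1
    have "card T > 0"
      using mc m by (cases "card T = 0") auto
    with 1 have "1 - 200 / real (card T) \<le> 0"
      by (simp add: field_simps)
    then show ?thesis
      by (meson measure_nonneg order_trans)
  next
    case 2
    then show ?thesis
      using prob_tv_dist_emp_gt_small_sample[OF fin m 2 \<epsilon>(2)] by simp
  next
    case 3
    then show ?thesis
      using prob_tv_dist_emp_gt_large_sample[OF fin 3 c \<epsilon>(1) mc] by simp
  qed
qed

theorem theorem1:
  fixes c :: real
  assumes "0 < c" and "c < 0.017"
  shows "\<exists>C::real. C > 0 \<and>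
    (\<forall>(n::nat) (k::nat) (Ts::nat \<Rightarrow> nat set) (\<epsilon>::real) (m::nat).
      n \<ge> 1 \<longrightarrow> k \<ge> 2 \<longrightarrow> (\<forall>j<n. card (Ts j) = k) \<longrightarrow>
      0 < \<epsilon> \<longrightarrow> \<epsilon> \<le> 1/2 \<longrightarrow> 0 < m \<longrightarrow>
      real m < c * real k ^ n / \<epsilon>^2 \<longrightarrow>
      (let T = PiE {..<n} Ts; D = pmf_of_set T in
        measure_pmf.prob (Pi_pmf {..<m} undefined (\<lambda>_. D))
          {S. tv_dist T (emp m S) (pmf D) > \<epsilon>}
        \<ge> 1 - C / real k ^ n))"
proof (intro exI[of _ 200] conjI allI impI)
  fix n k :: nat and Ts :: "nat \<Rightarrow> nat set" and \<epsilon> :: real and m :: nat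
  assume "k \<ge> 2" and card_Ts: "\<forall>j<n. card (Ts j) = k" and \<epsilon>: "0 < \<epsilon>" "\<epsilon> \<le> 1/2"
    and m: "0 < m" and mc: "real m < c * real k ^ n / \<epsilon>^2"
  define T where "T = PiE {..<n} Ts"
  have fin_Ts: "finite (Ts j)" if "j < n" for j
    using card_Ts that \<open>k \<ge> 2\<close> by (metis card.infinite not_numeral_le_zero)
  have fin: "finite T"
    unfolding T_def using fin_Ts by (intro finite_PiE) auto
  have card_T: "real (card T) = real k ^ n"
    unfolding T_def using card_Ts fin_Ts by (simp add: card_PiE)
  show "let T = PiE {..<n} Ts; D = pmf_of_set T in
        measure_pmf.prob (Pi_pmf {..<m} undefined (\<lambda>_. D))
          {S. tv_dist T (emp m S) (pmf D) > \<epsilon>}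
        \<ge> 1 - 200 / real k ^ n"
    using prob_tv_dist_emp_pmf_of_set_gt[OF fin assms(2) \<epsilon> m, of undefined] mc
    unfolding Let_def T_def[symmetric] card_T by simp
qed simp

end
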